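(* Let $\mathcal{R}$ be a finite valuation ring of order $q^r$, where $q$ is a power of an odd prime. There is an absolute-type constant $C>0$, depending only on $n$, such that for every integer $n>1$ and every set $\mathcal{A}\subset\mathcal{R}$ with $|\mathcal{A}|\ge 2q^{r-1}$, \[\max\left\{ |n\mathcal{A}^2|,\ |\mathcal{A}+\mathcal{A}|\right\}\ \ge\ C\min\left\{ q^{\frac{r}{n}}|\mathcal{A}|^{\frac{n-1}{n}},\ \frac{|\mathcal{A}|^{\frac{3n-2}{n}}}{q^{\frac{(n-1)(2r-1)}{n}}}\right\}.\]
   Context: A finite valuation ring is a finite, local, principal commutative ring with identity. Its unique maximal ideal is $(z)$ for a uniformizer $z$; the residue field $\mathcal{R}/(z)$ has $q$ elements; $r$ is the smallest positive integer with $z^r=0$; then $|\mathcal{R}|=q^r$ and $|(z)|=q^{r-1}$. For $\mathcal{A}\subset\mathcal{R}$: $\mathcal{A}+\mathcal{A}=\{a+b: a,b\in\mathcal{A}\}$, $\mathcal{A}^2=\{x^2: x\in\mathcal{A}\}$, and for a positive integer $n$, $n\mathcal{A}^2$ is the set of all sums $a_1+\cdots+a_n$ with $a_1,\dots,a_n\in\mathcal{A}^2$. *)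

theory Defs
  imports "HOL-Algebra.Algebra" "HOL-Computational_Algebra.Primes"
begin

definition finite_valuation_ring :: "('a, 'b) ring_scheme \<Rightarrow> bool" where
  "finite_valuation_ring R \<longleftrightarrow>
     cring R \<and> finite (carrier R) \<and>
     (\<exists>!M. maximalideal M R) \<and>
     (\<forall>I. ideal I R \<longrightarrow> principalideal I R)"

definition ring_sumset :: "('a, 'b) ring_scheme \<Rightarrow> 'a set \<Rightarrow> 'a set" where
  "ring_sumset R A = {a \<oplus>\<^bsub>R\<^esub> b | a b. a \<in> A \<and> b \<in> A}"

definition sq_sumset :: "('a, 'b) ring_scheme \<Rightarrow> nat \<Rightarrow> 'a set \<Rightarrow> 'a set" where
  "sq_sumset R n A =
     {finsum R (\<lambda>i. f i \<otimes>\<^bsub>R\<^esub> f i) {..<n} | f. f \<in> {..<n} \<rightarrow> A}"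

end

theory Submission
  imports Defs "HOL-Analysis.Convex"
begin

text \<open>
  Since the residue field has odd order, 2 is a unit. Put \<open>d = n - 1\<close> and regard each
  \<open>(y, w) \<in> A\<^sup>d \<times> A\<^sup>2\<close> as the sphere \<open>|x - y|\<^sup>2 + w = t\<close> in \<open>R\<^sup>d \<times> R\<close>. For \<open>w = b\<^sup>2\<close> every
  \<open>x = y + a\<close> with \<open>a \<in> A\<^sup>d\<close> lies in \<open>(A + A)\<^sup>d\<close> and has \<open>|x - y|\<^sup>2 + b\<^sup>2 \<in> n A\<^sup>2\<close>, so each sphere
  meets \<open>S = (A + A)\<^sup>d \<times> n A\<^sup>2\<close> in at least \<open>|A|\<^sup>d\<close> points. On the other hand, by Cauchy--Schwarz
  the incidences with \<open>S\<close> exceed their expected number \<open>|S| |A|\<^sup>d |A\<^sup>2| / |R|\<close> by at most the square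
  root of \<open>|S|\<close> times the number of coincidences between pairs of spheres. Two spheres whose
  centres differ by a unit in some coordinate meet in at most \<open>|R|\<^sup>d\<^sup>-\<^sup>1\<close> points, since the
  difference of their equations is linear in that coordinate with unit coefficient; and only
  \<open>|M|\<^sup>d\<close> centres are congruent to a given one modulo \<open>M\<close>. With \<open>|R| = q\<^sup>r\<close>, \<open>|M| = q\<^sup>r\<^sup>-\<^sup>1\<close> and
  \<open>|A\<^sup>2| \<ge> |A|/4\<close> (squaring is at most two-to-one outside \<open>M\<close>, and \<open>|A| \<ge> 2|M|\<close>), whichever
  term of the resulting inequality dominates gives one of the two lower bounds.
\<close>

lemma even_card_involution:
  assumes "finite S"
    and "\<And>x. x \<in> S \<Longrightarrow> f x \<in> S" "\<And>x. x \<in> S \<Longrightarrow> f (f x) = x" "\<And>x. x \<in> S \<Longrightarrow> f x \<noteq> x"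
  shows "even (card S)"
  using assms
proof (induction "card S" arbitrary: S rule: less_induct)
  case less
  show ?case
  proof (cases "S = {}")
    case False
    then obtain x where x: "x \<in> S"
      by auto
    define S' where "S' = S - {x, f x}"
    have fx: "f x \<in> S" "f x \<noteq> x"
      using less.prems x by auto
    then have "card S' = card S - 2"
      unfolding S'_def using less.prems(1) x by (simp add: card_Diff_subset)
    moreover have "2 \<le> card S"
      using card_mono[OF less.prems(1), of "{x, f x}"] x fx by simp
    ultimately have cS: "card S = Suc (Suc (card S'))"
      by simp
    have "even (card S')"
    proof (rule less.hyps)
      show "card S' < card S" "finite S'"
        using cS less.prems(1) unfolding S'_def by simp_all
      fix y assume "y \<in> S'"
      then have y: "y \<in> S" "y \<noteq> x" "y \<noteq> f x"
        unfolding S'_def by auto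
      have "f y \<noteq> x" "f y \<noteq> f x"
        using y less.prems(3)[OF y(1)] less.prems(3)[OF x] by metis+
      then show "f y \<in> S'" "f (f y) = y" "f y \<noteq> y"
        unfolding S'_def using y less.prems(2-4) by auto
    qed
    then show ?thesis
      using cS by simp
  qed simp
qed

lemma card_filter_eq_sum_indicator:
  "finite B \<Longrightarrow> real (card {a\<in>B. Q a}) = (\<Sum>a\<in>B. if Q a then 1 else 0)"
  by (simp add: sum.inter_filter[symmetric])

lemma sum_sq_deviation:
  fixes f :: "'b \<Rightarrow> real"
  assumes "finite D" "D \<noteq> {}"
  shows "(\<Sum>x\<in>D. (f x - sum f D / card D)^2) = (\<Sum>x\<in>D. (f x)^2) - (sum f D)^2 / card D"
proof -
  define m where "m = sum f D / card D"
  have k: "real (card D) > 0"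
    using assms by (simp add: card_gt_0_iff)
  have "(\<Sum>x\<in>D. (f x - m)^2) = (\<Sum>x\<in>D. (f x)^2 - 2 * m * f x + m^2)"
    by (rule sum.cong) (auto simp: power2_diff)
  also have "\<dots> = (\<Sum>x\<in>D. (f x)^2) - 2 * m * sum f D + card D * m^2"
    by (simp add: sum.distrib sum_subtractf sum_distrib_left)
  also have "\<dots> = (\<Sum>x\<in>D. (f x)^2) - (sum f D)^2 / card D"
    using k by (simp add: m_def power2_eq_square field_simps)
  finally show ?thesis
    unfolding m_def .
qed

text \<open>Cauchy--Schwarz for the deviations from the mean over \<open>D\<close>, restricted to \<open>S\<close>.\<close>
lemma sum_subset_le_mean_plus_deviation:
  fixes f :: "'b \<Rightarrow> real"
  assumes D: "finite D" "S \<subseteq> D" "D \<noteq> {}"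
  shows "sum f S \<le> card S * (sum f D / card D)
           + sqrt (card S * ((\<Sum>x\<in>D. (f x)^2) - (sum f D)^2 / card D))"
proof -
  define m where "m = sum f D / card D"
  define g where "g x = f x - m" for x
  have "(sum g S)^2 \<le> card S * (\<Sum>x\<in>S. (g x)^2)"
    using sum_squared_le_sum_of_squares[of g S] by (simp add: mult.commute)
  also have "(\<Sum>x\<in>S. (g x)^2) \<le> (\<Sum>x\<in>D. (g x)^2)"
    by (rule sum_mono2[OF D(1,2)]) simp
  also have "(\<Sum>x\<in>D. (g x)^2) = (\<Sum>x\<in>D. (f x)^2) - (sum f D)^2 / card D"
    unfolding g_def m_def using sum_sq_deviation[OF D(1,3)] .
  finally have "sum g S \<le> sqrt (card S * ((\<Sum>x\<in>D. (f x)^2) - (sum f D)^2 / card D))"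
    using real_le_rsqrt by (simp add: mult_left_mono)
  moreover have "sum f S = card S * m + sum g S"
    unfolding g_def by (simp add: sum_subtractf)
  ultimately show ?thesis
    unfolding m_def by simp
qed

lemma incidence_moments:
  fixes e :: "'v \<Rightarrow> 'p \<Rightarrow> 'a"
  assumes fin: "finite V" "finite U" "finite P" and eU: "\<And>x p. x \<in> V \<Longrightarrow> p \<in> P \<Longrightarrow> e x p \<in> U"
  shows "(\<Sum>x\<in>V. \<Sum>t\<in>U. real (card {p\<in>P. e x p = t})) = card V * card P"
    and "(\<Sum>x\<in>V. \<Sum>t\<in>U. (real (card {p\<in>P. e x p = t}))^2)
           = (\<Sum>p1\<in>P. \<Sum>p2\<in>P. real (card {x\<in>V. e x p1 = e x p2}))"
proof -
  have delta: "(\<Sum>t\<in>U. if e x p = t then 1 else 0 :: real) = 1" if "x \<in> V" "p \<in> P" for x p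
    using eU[OF that] fin(2) by simp
  have "(\<Sum>x\<in>V. \<Sum>t\<in>U. real (card {p\<in>P. e x p = t}))
      = (\<Sum>x\<in>V. \<Sum>t\<in>U. \<Sum>p\<in>P. if e x p = t then 1 else 0)"
    using fin(3) by (simp only: card_filter_eq_sum_indicator)
  also have "\<dots> = (\<Sum>x\<in>V. \<Sum>p\<in>P. \<Sum>t\<in>U. if e x p = t then 1 else 0)"
    by (simp add: sum.swap[of _ U P])
  also have "\<dots> = card V * card P"
    using delta by simp
  finally show "(\<Sum>x\<in>V. \<Sum>t\<in>U. real (card {p\<in>P. e x p = t})) = card V * card P" .
  let ?\<delta> = "\<lambda>x p t. if e x p = t then 1 else 0 :: real"
  have delta2: "(\<Sum>t\<in>U. ?\<delta> x p1 t * ?\<delta> x p2 t) = (if e x p1 = e x p2 then 1 else 0)"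
    if "x \<in> V" "p1 \<in> P" for x p1 p2
  proof -
    have "(\<Sum>t\<in>U. ?\<delta> x p1 t * ?\<delta> x p2 t) = (\<Sum>t\<in>U. if e x p1 = t then ?\<delta> x p2 (e x p1) else 0)"
      by (rule sum.cong) auto
    also have "\<dots> = (if e x p1 = e x p2 then 1 else 0)"
      using eU[OF that] fin(2) by (simp add: eq_commute)
    finally show ?thesis .
  qed
  have "(\<Sum>x\<in>V. \<Sum>t\<in>U. (real (card {p\<in>P. e x p = t}))^2)
      = (\<Sum>x\<in>V. \<Sum>t\<in>U. \<Sum>p1\<in>P. \<Sum>p2\<in>P. ?\<delta> x p1 t * ?\<delta> x p2 t)"
    using fin(3) by (simp only: card_filter_eq_sum_indicator power2_eq_square sum_product)
  also have "\<dots> = (\<Sum>x\<in>V. \<Sum>p1\<in>P. \<Sum>p2\<in>P. \<Sum>t\<in>U. ?\<delta> x p1 t * ?\<delta> x p2 t)"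
    by (simp add: sum.swap[of _ U P])
  also have "\<dots> = (\<Sum>x\<in>V. \<Sum>p1\<in>P. \<Sum>p2\<in>P. if e x p1 = e x p2 then 1 else 0)"
    by (intro sum.cong refl) (simp add: delta2)
  also have "\<dots> = (\<Sum>p1\<in>P. \<Sum>p2\<in>P. \<Sum>x\<in>V. if e x p1 = e x p2 then 1 else 0)"
    by (simp add: sum.swap[of _ V P])
  also have "\<dots> = (\<Sum>p1\<in>P. \<Sum>p2\<in>P. real (card {x\<in>V. e x p1 = e x p2}))"
    using fin(1) by (simp only: card_filter_eq_sum_indicator)
  finally show "(\<Sum>x\<in>V. \<Sum>t\<in>U. (real (card {p\<in>P. e x p = t}))^2)
      = (\<Sum>p1\<in>P. \<Sum>p2\<in>P. real (card {x\<in>V. e x p1 = e x p2}))" .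
qed

lemma sum_incidences_swap:
  fixes e :: "'v \<Rightarrow> 'p \<Rightarrow> 'a"
  assumes "finite V" "finite T" "finite P"
  shows "(\<Sum>x\<in>V. \<Sum>t\<in>T. real (card {p\<in>P. e x p = t})) = (\<Sum>p\<in>P. real (card {x\<in>V. e x p \<in> T}))"
proof -
  have "(\<Sum>x\<in>V. \<Sum>t\<in>T. real (card {p\<in>P. e x p = t}))
      = (\<Sum>x\<in>V. \<Sum>p\<in>P. \<Sum>t\<in>T. if e x p = t then 1 else 0)"
    using assms(3) by (simp only: card_filter_eq_sum_indicator) (simp add: sum.swap[of _ T P])
  also have "\<dots> = (\<Sum>p\<in>P. \<Sum>x\<in>V. if e x p \<in> T then 1 else 0)"
    using assms(2) by (simp add: sum.swap[of _ V P])
  also have "\<dots> = (\<Sum>p\<in>P. real (card {x\<in>V. e x p \<in> T}))"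
    using assms(1) by (simp only: card_filter_eq_sum_indicator)
  finally show ?thesis .
qed

locale fvr_uniformizer = cring R for R (structure) +
  fixes M z
  assumes finite_carrier: "finite (carrier R)"
    and maximal: "maximalideal M R"
    and maximal_unique: "\<And>M'. maximalideal M' R \<Longrightarrow> M' = M"
    and uniformizer: "z \<in> carrier R"
    and M_eq: "M = PIdl z"
begin

lemma max_ideal: "ideal M R"
  using maximal maximalideal.axioms(1) by blast

lemma max_ideal_subset: "M \<subseteq> carrier R"
  using ideal.Icarr[OF max_ideal] by blast

lemma max_ideal_subgroup: "additive_subgroup M R"
  using ideal.axioms(1)[OF max_ideal] .

lemma one_notin_max: "\<one> \<notin> M"
  using ideal.one_imp_carrier[OF max_ideal] maximalideal.I_notcarr[OF maximal] by auto

lemma finite_max_ideal: "finite M"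
  using finite_subset[OF max_ideal_subset finite_carrier] .

text \<open>A proper ideal of maximal cardinality among those containing \<open>I\<close> is maximal, hence equal to \<open>M\<close>.\<close>
lemma proper_ideal_subset_max:
  assumes "ideal I R" "I \<noteq> carrier R"
  shows "I \<subseteq> M"
proof -
  define S where "S = {J. ideal J R \<and> I \<subseteq> J \<and> J \<noteq> carrier R}"
  have "S \<subseteq> Pow (carrier R)"
    unfolding S_def using ideal.Icarr by fast
  then have finS: "finite S"
    by (rule finite_subset) (simp add: finite_carrier)
  have "I \<in> S"
    using assms unfolding S_def by auto
  then have "Max (card ` S) \<in> card ` S"
    using finS by (intro Max_in) auto
  then obtain J where JS: "J \<in> S" and "card J = Max (card ` S)"
    by auto
  then have Jmax: "\<And>J'. J' \<in> S \<Longrightarrow> card J' \<le> card J"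
    using finS by simp
  have "maximalideal J R"
  proof (rule maximalidealI)
    show "ideal J R" "carrier R \<noteq> J"
      using JS unfolding S_def by blast+
    fix J' assume J': "ideal J' R" "J \<subseteq> J'" "J' \<subseteq> carrier R"
    show "J' = J \<or> J' = carrier R"
    proof (cases "J' = carrier R")
      case False
      then have "J' \<in> S"
        using J' JS unfolding S_def by auto
      then have "card J' \<le> card J"
        by (rule Jmax)
      then have "J' = J"
        using J'(2) card_seteq[of J' J] finite_subset[OF J'(3) finite_carrier] by simp
      then show ?thesis ..
    qed simp
  qed
  then have "J = M"
    by (rule maximal_unique)
  then show ?thesis
    using JS unfolding S_def by blast
qed

lemma nonunit_in_max:
  assumes "x \<in> carrier R" "x \<notin> Units R"
  shows "x \<in> M"
proof -
  have "PIdl x \<noteq> carrier R"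
  proof
    assume "PIdl x = carrier R"
    then have "\<one> \<in> PIdl x"
      by simp
    then obtain y where y: "y \<in> carrier R" "\<one> = y \<otimes> x"
      unfolding cgenideal_def by auto
    then have "x \<in> Units R"
      using assms(1) m_comm[of y x] unfolding Units_def by force
    with assms(2) show False by simp
  qed
  then have "PIdl x \<subseteq> M"
    using proper_ideal_subset_max cgenideal_ideal[OF assms(1)] by blast
  then show ?thesis
    using cgenideal_self[OF assms(1)] by blast
qed

lemma Units_notin_max:
  assumes "x \<in> Units R"
  shows "x \<notin> M"
proof
  assume "x \<in> M"
  then have "inv x \<otimes> x \<in> M"
    using ideal.I_l_closed[OF max_ideal] Units_inv_closed[OF assms] by blast
  with one_notin_max Units_l_inv[OF assms] show False by simp
qed

lemma notin_max_Units: "x \<in> carrier R \<Longrightarrow> x \<notin> M \<Longrightarrow> x \<in> Units R"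
  using nonunit_in_max by blast

lemma Units_mult_eq_zero:
  assumes "u \<in> Units R" "v \<in> carrier R" "u \<otimes> v = \<zero>"
  shows "v = \<zero>"
proof -
  have "u \<otimes> v = u \<otimes> \<zero>"
    using assms Units_closed[OF assms(1)] by simp
  then show ?thesis
    using Units_l_cancel[OF assms(1,2) zero_closed] by simp
qed

lemma one_minus_max_Units:
  assumes "h \<in> M"
  shows "\<one> \<ominus> h \<in> Units R"
proof (rule notin_max_Units)
  have hc: "h \<in> carrier R"
    using assms max_ideal_subset by blast
  then show "\<one> \<ominus> h \<in> carrier R" by simp
  show "\<one> \<ominus> h \<notin> M"
  proof
    assume "\<one> \<ominus> h \<in> M"
    then have "(\<one> \<ominus> h) \<oplus> h \<in> M"
      using assms additive_subgroup.a_closed[OF max_ideal_subgroup] by blast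
    moreover have "(\<one> \<ominus> h) \<oplus> h = \<one>"
      using hc by algebra
    ultimately show False
      using one_notin_max by simp
  qed
qed

lemma zpow_in_max: "0 < k \<Longrightarrow> z [^] (k::nat) \<in> M"
proof -
  assume "0 < k"
  then obtain j where "k = Suc j"
    using gr0_implies_Suc by blast
  then have "z [^] k = z [^] j \<otimes> z"
    using uniformizer by simp
  then show ?thesis
    unfolding M_eq cgenideal_def using uniformizer by auto
qed

text \<open>Two equal powers \<open>z\<^sup>i = z\<^sup>i\<^sup>+\<^sup>d\<close> exist by pigeonhole; then \<open>z\<^sup>i (1 - z\<^sup>d) = 0\<close> with \<open>1 - z\<^sup>d\<close> a unit.\<close>
lemma uniformizer_nilpotent: "\<exists>k::nat. 0 < k \<and> z [^] k = \<zero>"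
proof -
  let ?S = "{..card (carrier R)}"
  have "(\<lambda>k::nat. z [^] k) ` ?S \<subseteq> carrier R"
    using uniformizer by auto
  then have "card ((\<lambda>k::nat. z [^] k) ` ?S) < card ?S"
    using card_mono[OF finite_carrier] by (simp add: le_imp_less_Suc)
  then have "\<not> inj_on (\<lambda>k::nat. z [^] k) ?S"
    using card_image by fastforce
  then obtain a b :: nat where "a \<noteq> b" "z [^] a = z [^] b"
    unfolding inj_on_def by blast
  then obtain i j :: nat where "i < j" "z [^] i = z [^] j"
    by (cases "a < b") (auto simp: neq_iff)
  then obtain d where "0 < d" and ijd: "z [^] i = z [^] (i + d)"
    using less_imp_add_positive by blast
  have zi: "z [^] i \<in> carrier R" and zd: "z [^] d \<in> carrier R"
    using uniformizer by auto
  have "z [^] (i + d) = z [^] i \<otimes> z [^] d"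
    using uniformizer by (rule nat_pow_mult[symmetric])
  with ijd have "z [^] i = z [^] i \<otimes> z [^] d"
    by simp
  moreover have "(\<one> \<ominus> z [^] d) \<otimes> z [^] i = z [^] i \<ominus> z [^] i \<otimes> z [^] d"
    using zi zd by algebra
  ultimately have "(\<one> \<ominus> z [^] d) \<otimes> z [^] i = \<zero>"
    using zi by (simp add: r_neg)
  moreover have "\<one> \<ominus> z [^] d \<in> Units R"
    using one_minus_max_Units zpow_in_max \<open>0 < d\<close> by blast
  ultimately have "z [^] i = \<zero>"
    using Units_mult_eq_zero zi by blast
  then show ?thesis
    using uniformizer by (intro exI[of _ "Suc i"]) simp
qed

definition nil_index :: nat where
  "nil_index = (LEAST k::nat. 0 < k \<and> z [^] k = \<zero>)"

lemma nil_index: "0 < nil_index" "z [^] nil_index = \<zero>"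
  unfolding nil_index_def using LeastI_ex[OF uniformizer_nilpotent] by simp_all

lemma zpow_nonzero_below_nil_index: "0 < k \<Longrightarrow> k < nil_index \<Longrightarrow> z [^] k \<noteq> \<zero>"
  unfolding nil_index_def using not_less_Least by blast

definition zpow_ideal :: "nat \<Rightarrow> 'a set" where
  "zpow_ideal k = {z [^] k \<otimes> x | x. x \<in> carrier R}"

definition ann_z :: "'a set" where
  "ann_z = {y \<in> carrier R. z \<otimes> y = \<zero>}"

lemma zpow_ideal_subset: "zpow_ideal k \<subseteq> carrier R"
  unfolding zpow_ideal_def using uniformizer by auto

lemma finite_zpow_ideal: "finite (zpow_ideal k)"
  using finite_subset[OF zpow_ideal_subset finite_carrier] .

lemma zpow_ideal_0: "zpow_ideal 0 = carrier R"
  unfolding zpow_ideal_def using l_one by force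

lemma zpow_ideal_1: "zpow_ideal 1 = M"
proof -
  have "\<And>x. x \<in> carrier R \<Longrightarrow> z [^] (1::nat) \<otimes> x = x \<otimes> z"
    using uniformizer m_comm by simp
  then show ?thesis
    unfolding zpow_ideal_def M_eq cgenideal_def by (metis (lifting))
qed

lemma zpow_ideal_nil_index: "zpow_ideal nil_index = {\<zero>}"
  unfolding zpow_ideal_def using nil_index by (auto intro!: exI[of _ \<one>])

lemma zpow_ideal_add:
  assumes "a \<in> zpow_ideal k" "b \<in> zpow_ideal k"
  shows "a \<oplus> b \<in> zpow_ideal k"
proof -
  obtain x y where "x \<in> carrier R" "y \<in> carrier R" "a = z [^] k \<otimes> x" "b = z [^] k \<otimes> y"
    using assms unfolding zpow_ideal_def by auto
  then have "a \<oplus> b = z [^] k \<otimes> (x \<oplus> y)" "x \<oplus> y \<in> carrier R"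
    using uniformizer by (simp_all add: r_distr)
  then show ?thesis
    unfolding zpow_ideal_def by blast
qed

lemma mult_z_zpow_ideal:
  assumes "y \<in> zpow_ideal k"
  shows "z \<otimes> y \<in> zpow_ideal (Suc k)"
proof -
  obtain x where x: "x \<in> carrier R" "y = z [^] k \<otimes> x"
    using assms unfolding zpow_ideal_def by auto
  then have "z \<otimes> y = z [^] Suc k \<otimes> x"
    using uniformizer by (simp add: m_assoc m_comm m_lcomm)
  then show ?thesis
    unfolding zpow_ideal_def using x by auto
qed

lemma zpow_ideal_Suc_eq: "zpow_ideal (Suc k) = (\<lambda>y. z \<otimes> y) ` zpow_ideal k"
proof
  show "zpow_ideal (Suc k) \<subseteq> (\<lambda>y. z \<otimes> y) ` zpow_ideal k"
  proof
    fix t assume "t \<in> zpow_ideal (Suc k)"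
    then obtain x where x: "x \<in> carrier R" "t = z [^] Suc k \<otimes> x"
      unfolding zpow_ideal_def by auto
    then have "t = z \<otimes> (z [^] k \<otimes> x)"
      using uniformizer by (simp add: m_assoc m_comm m_lcomm)
    moreover have "z [^] k \<otimes> x \<in> zpow_ideal k"
      unfolding zpow_ideal_def using x by auto
    ultimately show "t \<in> (\<lambda>y. z \<otimes> y) ` zpow_ideal k"
      by blast
  qed
qed (use mult_z_zpow_ideal in blast)

lemma zpow_ideal_antimono:
  assumes "i \<le> j"
  shows "zpow_ideal j \<subseteq> zpow_ideal i"
proof
  fix a assume "a \<in> zpow_ideal j"
  then obtain x where x: "x \<in> carrier R" "a = z [^] j \<otimes> x"
    unfolding zpow_ideal_def by auto
  have "z [^] j = z [^] i \<otimes> z [^] (j - i)"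
    using uniformizer assms by (simp add: nat_pow_mult)
  then have "a = z [^] i \<otimes> (z [^] (j - i) \<otimes> x)"
    using x uniformizer by (simp add: m_assoc)
  then show "a \<in> zpow_ideal i"
    unfolding zpow_ideal_def using x uniformizer by auto
qed

lemma zpow_ideal_or_unit_multiple:
  assumes "y \<in> carrier R"
  shows "y \<in> zpow_ideal k \<or> (\<exists>j<k. \<exists>u\<in>Units R. y = z [^] j \<otimes> u)"
proof (induction k)
  case 0
  then show ?case
    using assms zpow_ideal_0 by simp
next
  case (Suc k)
  show ?case
  proof (cases "y \<in> zpow_ideal k")
    case True
    then obtain x where x: "x \<in> carrier R" "y = z [^] k \<otimes> x"
      unfolding zpow_ideal_def by auto
    show ?thesis
    proof (cases "x \<in> Units R")
      case False
      then have "x \<in> M"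
        using nonunit_in_max x by simp
      then obtain x' where x': "x' \<in> carrier R" "x = x' \<otimes> z"
        unfolding M_eq cgenideal_def by auto
      have "y = z [^] Suc k \<otimes> x'"
        using x x' uniformizer by (simp add: m_assoc m_comm)
      then show ?thesis
        unfolding zpow_ideal_def using x' by auto
    qed (use x in auto)
  next
    case False
    then show ?thesis
      using Suc.IH less_Suc_eq by blast
  qed
qed

lemma ann_z_subset: "ann_z \<subseteq> zpow_ideal (nil_index - 1)"
proof
  fix y assume y: "y \<in> ann_z"
  then have yc: "y \<in> carrier R" and zy: "z \<otimes> y = \<zero>"
    unfolding ann_z_def by auto
  show "y \<in> zpow_ideal (nil_index - 1)"
  proof (rule ccontr)
    assume "y \<notin> zpow_ideal (nil_index - 1)"
    then obtain j u where ju: "j < nil_index - 1" "u \<in> Units R" "y = z [^] j \<otimes> u"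
      using zpow_ideal_or_unit_multiple[OF yc] by blast
    have uc: "u \<in> carrier R"
      using ju by auto
    have "z \<otimes> y = z [^] Suc j \<otimes> u"
      using ju uc uniformizer by (simp add: m_assoc m_comm m_lcomm)
    then have "u \<otimes> z [^] Suc j = \<zero>"
      using zy uc uniformizer m_comm by simp
    then have "z [^] Suc j = \<zero>"
      using Units_mult_eq_zero ju(2) uniformizer by simp
    moreover have "Suc j < nil_index"
      using ju(1) by simp
    ultimately show False
      using zpow_nonzero_below_nil_index[of "Suc j"] by blast
  qed
qed

lemma finite_ann_z: "finite ann_z"
  using finite_subset[OF _ finite_carrier] unfolding ann_z_def by auto

lemma card_ann_z_pos: "0 < card ann_z"
proof -
  have "\<zero> \<in> ann_z"
    unfolding ann_z_def using uniformizer by simp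
  then show ?thesis
    using finite_ann_z card_gt_0_iff by blast
qed

text \<open>The fibres of multiplication by \<open>z\<close> on \<open>(z\<^sup>i)\<close> are translates of \<open>ann_z\<close>, which lies in \<open>(z\<^sup>i)\<close> below the nilpotency index.\<close>
lemma fibre_mult_z_eq:
  assumes "i < nil_index" and y0: "y0 \<in> zpow_ideal i" "z \<otimes> y0 = t"
  shows "{y \<in> zpow_ideal i. z \<otimes> y = t} = (\<lambda>k. y0 \<oplus> k) ` ann_z"
proof -
  have y0c: "y0 \<in> carrier R" and tc: "t \<in> carrier R"
    using y0 zpow_ideal_subset uniformizer by auto
  have "i \<le> nil_index - 1"
    using assms(1) by simp
  then have ann: "ann_z \<subseteq> zpow_ideal i"
    using ann_z_subset zpow_ideal_antimono by blast
  show ?thesis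
  proof (intro equalityI subsetI)
    fix y assume y: "y \<in> {y \<in> zpow_ideal i. z \<otimes> y = t}"
    then have yc: "y \<in> carrier R"
      using zpow_ideal_subset by blast
    have "z \<otimes> (y \<ominus> y0) = z \<otimes> y \<ominus> z \<otimes> y0"
      using yc y0c uniformizer by algebra
    then have "z \<otimes> (y \<ominus> y0) = \<zero>"
      using y y0 tc by (simp add: r_neg minus_eq)
    then have "y \<ominus> y0 \<in> ann_z"
      unfolding ann_z_def using yc y0c by simp
    moreover have "y = y0 \<oplus> (y \<ominus> y0)"
      using yc y0c by algebra
    ultimately show "y \<in> (\<lambda>k. y0 \<oplus> k) ` ann_z"
      by blast
  next
    fix y assume "y \<in> (\<lambda>k. y0 \<oplus> k) ` ann_z"
    then obtain k where k: "k \<in> ann_z" "y = y0 \<oplus> k"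
      by auto
    have kc: "k \<in> carrier R" and zk: "z \<otimes> k = \<zero>"
      using k unfolding ann_z_def by auto
    have "z \<otimes> y = z \<otimes> y0 \<oplus> z \<otimes> k"
      using k kc y0c uniformizer by (simp add: r_distr)
    then have "z \<otimes> y = t"
      using zk y0 tc by simp
    moreover have "y \<in> zpow_ideal i"
      using zpow_ideal_add[OF y0(1)] ann k by auto
    ultimately show "y \<in> {y \<in> zpow_ideal i. z \<otimes> y = t}"
      by simp
  qed
qed

lemma card_fibre_mult_z:
  assumes "i < nil_index" "t \<in> zpow_ideal (Suc i)"
  shows "card {y \<in> zpow_ideal i. z \<otimes> y = t} = card ann_z"
proof -
  obtain y0 where y0: "y0 \<in> zpow_ideal i" "z \<otimes> y0 = t"
    using assms(2) zpow_ideal_Suc_eq by auto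
  then have y0c: "y0 \<in> carrier R"
    using zpow_ideal_subset by blast
  have "inj_on (\<lambda>k. y0 \<oplus> k) ann_z"
  proof (rule inj_onI)
    fix k1 k2 assume "k1 \<in> ann_z" "k2 \<in> ann_z" "y0 \<oplus> k1 = y0 \<oplus> k2"
    then show "k1 = k2"
      using y0c add.l_cancel unfolding ann_z_def by blast
  qed
  then show ?thesis
    using fibre_mult_z_eq[OF assms(1) y0] by (simp add: card_image)
qed

lemma card_zpow_ideal_Suc:
  assumes "i < nil_index"
  shows "card (zpow_ideal i) = card (zpow_ideal (Suc i)) * card ann_z"
proof -
  have "\<And>y. y \<in> zpow_ideal i \<Longrightarrow> {t \<in> zpow_ideal (Suc i). z \<otimes> y = t} = {z \<otimes> y}"
    using mult_z_zpow_ideal by auto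
  then have "card (zpow_ideal i) = (\<Sum>y\<in>zpow_ideal i. card {t \<in> zpow_ideal (Suc i). z \<otimes> y = t})"
    by simp
  also have "\<dots> = card ann_z * card (zpow_ideal (Suc i))"
    using card_fibre_mult_z[OF assms] by (intro sum_multicount finite_zpow_ideal) blast
  finally show ?thesis
    by simp
qed

lemma card_zpow_ideal: "m \<le> nil_index \<Longrightarrow> card (zpow_ideal (nil_index - m)) = card ann_z ^ m"
proof (induction m)
  case 0
  then show ?case
    using zpow_ideal_nil_index by simp
next
  case (Suc m)
  then have "Suc (nil_index - Suc m) = nil_index - m"
    by simp
  with Suc show ?case
    using card_zpow_ideal_Suc[of "nil_index - Suc m"] by simp
qed

lemma card_carrier: "card (carrier R) = card ann_z ^ nil_index"
  using card_zpow_ideal[of nil_index] zpow_ideal_0 by simp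

lemma card_max_ideal: "card M = card ann_z ^ (nil_index - 1)"
  using card_zpow_ideal[of "nil_index - 1"] zpow_ideal_1 nil_index(1) by simp

lemma card_residue_field: "card (carrier (R Quot M)) = card ann_z"
proof -
  have "card (carrier (R Quot M)) * card M = card (carrier R)"
    using a_lagrange[OF finite_carrier max_ideal_subgroup] unfolding FactRing_def order_def by simp
  moreover have "card ann_z ^ nil_index = card ann_z * card ann_z ^ (nil_index - 1)"
    using nil_index(1) by (metis Suc_diff_1 power_Suc)
  ultimately show ?thesis
    using card_carrier card_max_ideal card_ann_z_pos by simp
qed

end

lemma (in fvr_uniformizer) two_Units:
  assumes "odd (card (carrier (R Quot M)))"
  shows "\<one> \<oplus> \<one> \<in> Units R"
proof -
  have "\<one> \<oplus> \<one> \<notin> M"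
  proof
    assume two: "\<one> \<oplus> \<one> \<in> M"
    have coset_eq: "M +> x = M +> y \<longleftrightarrow> x \<ominus> y \<in> M" if "x \<in> carrier R" "y \<in> carrier R" for x y
      using quotient_eq_iff_same_a_r_cos[OF max_ideal that] by simp
    have carrier_quot: "carrier (R Quot M) = (\<lambda>x. M +> x) ` carrier R"
      unfolding FactRing_def A_RCOSETS_def' by auto
    define f where "f C = C <+>\<^bsub>R\<^esub> (M +> \<one>)" for C
    have f: "f (M +> x) = M +> (x \<oplus> \<one>)" if "x \<in> carrier R" for x
      unfolding f_def using ideal.a_rcos_sum[OF max_ideal that one_closed] .
    have "even (card (carrier (R Quot M)))"
    proof (rule even_card_involution)
      show "finite (carrier (R Quot M))"
        unfolding carrier_quot using finite_carrier by simp
      fix C assume "C \<in> carrier (R Quot M)"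
      then obtain x where x: "x \<in> carrier R" "C = M +> x"
        unfolding carrier_quot by blast
      have "x \<oplus> \<one> \<oplus> \<one> \<ominus> x = \<one> \<oplus> \<one>" "x \<oplus> \<one> \<ominus> x = \<one>"
        using x(1) by algebra+
      then show "f C \<in> carrier (R Quot M)" "f (f C) = C" "f C \<noteq> C"
        using x f coset_eq two one_notin_max unfolding carrier_quot by auto
    qed
    with assms show False
      by simp
  qed
  then show ?thesis
    using notin_max_Units by simp
qed

abbreviation vecs :: "nat \<Rightarrow> 'a set \<Rightarrow> (nat \<Rightarrow> 'a) set" where
  "vecs d S \<equiv> PiE {..<d} (\<lambda>_. S)"

lemma card_vecs: "finite S \<Longrightarrow> card (vecs d S) = card S ^ d"
  by (simp add: card_PiE)

locale fvr_odd = fvr_uniformizer +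
  assumes two_Units: "\<one> \<oplus> \<one> \<in> Units R"
begin

text \<open>\<open>(x - y)(x + y) = 0\<close>, and \<open>x - y\<close>, \<open>x + y\<close> cannot both lie in \<open>M\<close> since their sum \<open>2x\<close> is a unit.\<close>
lemma square_eq_square_Units:
  assumes xy: "x \<in> carrier R" "y \<in> carrier R" "x \<notin> M" "y \<notin> M" and sq: "x \<otimes> x = y \<otimes> y"
  shows "y = x \<or> y = \<ominus> x"
proof -
  have "(x \<ominus> y) \<otimes> (x \<oplus> y) = x \<otimes> x \<ominus> y \<otimes> y"
    using xy by algebra
  then have prod: "(x \<ominus> y) \<otimes> (x \<oplus> y) = \<zero>" "(x \<oplus> y) \<otimes> (x \<ominus> y) = \<zero>"
    using sq xy by (simp_all add: r_neg minus_eq m_comm)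
  show ?thesis
  proof (cases "x \<ominus> y \<in> M")
    case True
    have "(\<one> \<oplus> \<one>) \<otimes> x \<in> Units R"
      using two_Units notin_max_Units xy by simp
    moreover have "(x \<ominus> y) \<oplus> (x \<oplus> y) = (\<one> \<oplus> \<one>) \<otimes> x"
      using xy by algebra
    ultimately have "x \<oplus> y \<notin> M"
      using True Units_notin_max additive_subgroup.a_closed[OF max_ideal_subgroup] by force
    then have "x \<ominus> y = \<zero>"
      using Units_mult_eq_zero[OF notin_max_Units _ prod(2)] xy by simp
    moreover have "y = x \<ominus> (x \<ominus> y)"
      using xy by algebra
    ultimately show ?thesis
      using xy by simp
  next
    case False
    then have "x \<oplus> y = \<zero>"
      using Units_mult_eq_zero[OF notin_max_Units _ prod(1)] xy by simp
    moreover have "y = (x \<oplus> y) \<ominus> x"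
      using xy by algebra
    ultimately show ?thesis
      using xy by (simp add: minus_eq)
  qed
qed

text \<open>Outside \<open>M\<close> squaring is at most two-to-one.\<close>
lemma card_le_card_max_plus_squares:
  assumes A: "A \<subseteq> carrier R"
  shows "card A \<le> card M + 2 * card ((\<lambda>a. a \<otimes> a) ` A)"
proof -
  let ?sq = "\<lambda>a. a \<otimes> a"
  define U where "U = A - M"
  define g where "g = inv_into U ?sq"
  have finA: "finite A"
    using finite_subset[OF A finite_carrier] .
  have finU: "finite (?sq ` U)"
    using finA unfolding U_def by simp
  have cover: "U \<subseteq> g ` ?sq ` U \<union> (\<lambda>w. \<ominus> g w) ` ?sq ` U"
  proof
    fix x assume x: "x \<in> U"
    have "?sq x \<in> ?sq ` U"
      using x by (rule imageI)
    then have "g (?sq x) \<in> U" "?sq (g (?sq x)) = ?sq x"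
      unfolding g_def by (rule inv_into_into, rule f_inv_into_f)
    then have "x = g (?sq x) \<or> x = \<ominus> g (?sq x)"
      using square_eq_square_Units x A unfolding U_def by auto
    then show "x \<in> g ` ?sq ` U \<union> (\<lambda>w. \<ominus> g w) ` ?sq ` U"
      using x by blast
  qed
  have "card U \<le> card (g ` ?sq ` U \<union> (\<lambda>w. \<ominus> g w) ` ?sq ` U)"
    using cover finU by (intro card_mono) auto
  also have "\<dots> \<le> card (g ` ?sq ` U) + card ((\<lambda>w. \<ominus> g w) ` ?sq ` U)"
    by (rule card_Un_le)
  also have "\<dots> \<le> card (?sq ` U) + card (?sq ` U)"
    by (intro add_mono card_image_le finU)
  also have "card (?sq ` U) \<le> card (?sq ` A)"
    unfolding U_def using finA by (intro card_mono) auto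
  finally have "card U \<le> 2 * card (?sq ` A)"
    by simp
  moreover have "card A \<le> card (U \<union> M)"
    unfolding U_def using finA finite_max_ideal by (intro card_mono) auto
  moreover have "card (U \<union> M) \<le> card U + card M"
    by (rule card_Un_le)
  ultimately show ?thesis
    by simp
qed

lemma card_squares_ge:
  assumes "A \<subseteq> carrier R" "2 * card M \<le> card A"
  shows "real (card A) / 4 \<le> real (card ((\<lambda>a. a \<otimes> a) ` A))"
  using card_le_card_max_plus_squares[OF assms(1)] assms(2) by linarith

definition sqnorm :: "nat \<Rightarrow> (nat \<Rightarrow> 'a) \<Rightarrow> 'a" where
  "sqnorm d v = finsum R (\<lambda>i. v i \<otimes> v i) {..<d}"

definition sqdist_plus :: "nat \<Rightarrow> (nat \<Rightarrow> 'a) \<Rightarrow> (nat \<Rightarrow> 'a) \<Rightarrow> 'a \<Rightarrow> 'a" where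
  "sqdist_plus d x y w = sqnorm d (\<lambda>i. x i \<ominus> y i) \<oplus> w"

lemma sqnorm_closed: "(\<And>i. i < d \<Longrightarrow> v i \<in> carrier R) \<Longrightarrow> sqnorm d v \<in> carrier R"
  unfolding sqnorm_def by (intro finsum_closed) (auto simp: Pi_def)

lemma sqdist_plus_closed:
  "x \<in> vecs d (carrier R) \<Longrightarrow> y \<in> vecs d (carrier R) \<Longrightarrow> w \<in> carrier R \<Longrightarrow> sqdist_plus d x y w \<in> carrier R"
  unfolding sqdist_plus_def by (intro add.m_closed sqnorm_closed) auto

lemma sqnorm_split:
  assumes "i0 < d" "\<And>i. i < d \<Longrightarrow> v i \<in> carrier R"
  shows "sqnorm d v = v i0 \<otimes> v i0 \<oplus> finsum R (\<lambda>i. v i \<otimes> v i) ({..<d} - {i0})"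
proof -
  have e: "{..<d} = insert i0 ({..<d} - {i0})"
    using assms by auto
  show ?thesis
    unfolding sqnorm_def by (subst e, rule finsum_insert) (use assms in \<open>auto simp: Pi_def\<close>)
qed

text \<open>Both equations say \<open>2(b - a) u + a\<^sup>2 - b\<^sup>2 = s' - s\<close>, and \<open>2(b - a)\<close> is a unit.\<close>
lemma coordinate_unique:
  assumes c: "u \<in> carrier R" "u' \<in> carrier R" "a \<in> carrier R" "b \<in> carrier R" "s \<in> carrier R" "s' \<in> carrier R"
    and e: "(u \<ominus> a) \<otimes> (u \<ominus> a) \<oplus> s = (u \<ominus> b) \<otimes> (u \<ominus> b) \<oplus> s'"
    and e': "(u' \<ominus> a) \<otimes> (u' \<ominus> a) \<oplus> s = (u' \<ominus> b) \<otimes> (u' \<ominus> b) \<oplus> s'"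
    and ab: "a \<ominus> b \<notin> M"
  shows "u = u'"
proof -
  define k where "k = (\<one> \<oplus> \<one>) \<otimes> (b \<ominus> a)"
  define c0 where "c0 = a \<otimes> a \<ominus> b \<otimes> b"
  have kc: "k \<in> carrier R" and c0c: "c0 \<in> carrier R"
    unfolding k_def c0_def using c by auto
  have lin: "k \<otimes> v \<oplus> c0 = s' \<ominus> s"
    if v: "v \<in> carrier R" and ev: "(v \<ominus> a) \<otimes> (v \<ominus> a) \<oplus> s = (v \<ominus> b) \<otimes> (v \<ominus> b) \<oplus> s'" for v
  proof -
    have "k \<otimes> v \<oplus> c0 = ((v \<ominus> a) \<otimes> (v \<ominus> a) \<oplus> s) \<ominus> (v \<ominus> b) \<otimes> (v \<ominus> b) \<ominus> s"
      unfolding k_def c0_def using c v by algebra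
    also have "\<dots> = ((v \<ominus> b) \<otimes> (v \<ominus> b) \<oplus> s') \<ominus> (v \<ominus> b) \<otimes> (v \<ominus> b) \<ominus> s"
      by (simp only: ev)
    also have "\<dots> = s' \<ominus> s"
      using c v by algebra
    finally show ?thesis .
  qed
  have "k \<otimes> u = (k \<otimes> u \<oplus> c0) \<ominus> c0" "k \<otimes> u' = (k \<otimes> u' \<oplus> c0) \<ominus> c0"
    using kc c0c c by algebra+
  then have "k \<otimes> u = k \<otimes> u'"
    using lin[OF c(1) e] lin[OF c(2) e'] by simp
  moreover have "b \<ominus> a \<notin> M"
  proof
    assume "b \<ominus> a \<in> M"
    then have "\<ominus> (b \<ominus> a) \<in> M"
      using additive_subgroup.a_inv_closed[OF max_ideal_subgroup] by blast
    moreover have "\<ominus> (b \<ominus> a) = a \<ominus> b"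
      using c by algebra
    ultimately show False
      using ab by simp
  qed
  then have "k \<in> Units R"
    unfolding k_def using two_Units notin_max_Units c by simp
  ultimately show ?thesis
    using Units_l_cancel c by blast
qed

lemma sqdist_plus_eq_coordinate_unique:
  assumes x: "x \<in> vecs d (carrier R)" "x' \<in> vecs d (carrier R)"
    and y: "y1 \<in> vecs d (carrier R)" "y2 \<in> vecs d (carrier R)"
    and w: "w1 \<in> carrier R" "w2 \<in> carrier R"
    and i0: "i0 < d" "y1 i0 \<ominus> y2 i0 \<notin> M"
    and agree: "\<And>i. i \<in> {..<d} - {i0} \<Longrightarrow> x i = x' i"
    and sol: "sqdist_plus d x y1 w1 = sqdist_plus d x y2 w2" "sqdist_plus d x' y1 w1 = sqdist_plus d x' y2 w2"
  shows "x = x'"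
proof -
  let ?F = "{..<d} - {i0}"
  have xc: "\<And>i. i < d \<Longrightarrow> x i \<in> carrier R" "\<And>i. i < d \<Longrightarrow> x' i \<in> carrier R"
    and yc: "\<And>i. i < d \<Longrightarrow> y1 i \<in> carrier R" "\<And>i. i < d \<Longrightarrow> y2 i \<in> carrier R"
    using x y by auto
  define s where "s y w = finsum R (\<lambda>i. (x i \<ominus> y i) \<otimes> (x i \<ominus> y i)) ?F \<oplus> w" for y w
  have sc: "s y w \<in> carrier R" if "\<And>i. i < d \<Longrightarrow> y i \<in> carrier R" "w \<in> carrier R" for y w
    unfolding s_def using xc that by (intro add.m_closed finsum_closed) auto
  have split: "sqdist_plus d v y w = (v i0 \<ominus> y i0) \<otimes> (v i0 \<ominus> y i0) \<oplus> s y w"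
    if v: "\<And>i. i < d \<Longrightarrow> v i \<in> carrier R" "\<And>i. i \<in> ?F \<Longrightarrow> v i = x i"
      and y: "\<And>i. i < d \<Longrightarrow> y i \<in> carrier R" and w: "w \<in> carrier R" for v y w
  proof -
    let ?B = "finsum R (\<lambda>i. (x i \<ominus> y i) \<otimes> (x i \<ominus> y i)) ?F"
    have "finsum R (\<lambda>i. (v i \<ominus> y i) \<otimes> (v i \<ominus> y i)) ?F = ?B"
      using v y xc by (intro finsum_cong') auto
    then have "sqnorm d (\<lambda>i. v i \<ominus> y i) = (v i0 \<ominus> y i0) \<otimes> (v i0 \<ominus> y i0) \<oplus> ?B"
      using sqnorm_split[OF i0(1), of "\<lambda>i. v i \<ominus> y i"] v y by simp
    moreover have "?B \<in> carrier R"
      using xc y by (intro finsum_closed) auto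
    ultimately show ?thesis
      unfolding sqdist_plus_def s_def using v y w i0(1) by (simp add: a_assoc)
  qed
  have "x i0 = x' i0"
  proof (rule coordinate_unique)
    show "(x i0 \<ominus> y1 i0) \<otimes> (x i0 \<ominus> y1 i0) \<oplus> s y1 w1 = (x i0 \<ominus> y2 i0) \<otimes> (x i0 \<ominus> y2 i0) \<oplus> s y2 w2"
      using sol(1) split[OF xc(1)] yc w by simp
    show "(x' i0 \<ominus> y1 i0) \<otimes> (x' i0 \<ominus> y1 i0) \<oplus> s y1 w1 = (x' i0 \<ominus> y2 i0) \<otimes> (x' i0 \<ominus> y2 i0) \<oplus> s y2 w2"
      using sol(2) split[OF xc(2)] yc w agree by simp
  qed (use xc yc w i0 sc in auto)
  with agree show ?thesis
    using x by (intro PiE_ext) auto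
qed

lemma card_sqdist_plus_eq_le:
  assumes y: "y1 \<in> vecs d (carrier R)" "y2 \<in> vecs d (carrier R)"
    and w: "w1 \<in> carrier R" "w2 \<in> carrier R"
    and i0: "i0 < d" "y1 i0 \<ominus> y2 i0 \<notin> M"
  shows "card {x \<in> vecs d (carrier R). sqdist_plus d x y1 w1 = sqdist_plus d x y2 w2} \<le> card (carrier R) ^ (d - 1)"
proof -
  let ?S = "{x \<in> vecs d (carrier R). sqdist_plus d x y1 w1 = sqdist_plus d x y2 w2}"
  let ?F = "{..<d} - {i0}"
  have "inj_on (\<lambda>x. restrict x ?F) ?S"
  proof (rule inj_onI)
    fix x x' assume x: "x \<in> ?S" "x' \<in> ?S" and r: "restrict x ?F = restrict x' ?F"
    have "x i = x' i" if "i \<in> ?F" for i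
      using fun_cong[OF r, of i] that by simp
    with x show "x = x'"
      by (intro sqdist_plus_eq_coordinate_unique[OF _ _ y w i0]) auto
  qed
  moreover have "(\<lambda>x. restrict x ?F) ` ?S \<subseteq> PiE ?F (\<lambda>_. carrier R)"
  proof (rule image_subsetI)
    fix x assume "x \<in> ?S"
    then show "restrict x ?F \<in> PiE ?F (\<lambda>_. carrier R)"
      unfolding restrict_PiE_iff by auto
  qed
  ultimately have "card ?S \<le> card (PiE ?F (\<lambda>_. carrier R))"
    using finite_carrier by (intro card_inj_on_le finite_PiE) auto
  also have "\<dots> = card (carrier R) ^ (d - 1)"
    using i0(1) by (simp add: card_PiE)
  finally show ?thesis .
qed

text \<open>For fixed \<open>x\<close> and \<open>w1\<close>, at most one \<open>w2\<close> solves the equation.\<close>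
lemma sum_card_sqdist_plus_eq_le:
  assumes y: "y1 \<in> vecs d (carrier R)" "y2 \<in> vecs d (carrier R)" and W: "W \<subseteq> carrier R" "finite W"
  shows "(\<Sum>w1\<in>W. \<Sum>w2\<in>W. real (card {x \<in> vecs d (carrier R). sqdist_plus d x y1 w1 = sqdist_plus d x y2 w2}))
          \<le> real (card (vecs d (carrier R))) * card W"
proof -
  let ?V = "vecs d (carrier R)"
  let ?E = "\<lambda>x w1 w2. sqdist_plus d x y1 w1 = sqdist_plus d x y2 w2"
  have finV: "finite ?V"
    using finite_carrier by (simp add: finite_PiE)
  have unique: "card {w2 \<in> W. ?E x w1 w2} \<le> 1" if x: "x \<in> ?V" for x w1
  proof -
    let ?Q = "sqnorm d (\<lambda>i. x i \<ominus> y2 i)"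
    have Qc: "?Q \<in> carrier R"
      using x y by (intro sqnorm_closed) auto
    have "a = b" if "a \<in> {w2 \<in> W. ?E x w1 w2}" "b \<in> {w2 \<in> W. ?E x w1 w2}" for a b
    proof -
      have "a \<in> carrier R" "b \<in> carrier R" "?Q \<oplus> a = ?Q \<oplus> b"
        using that W unfolding sqdist_plus_def by auto
      then show ?thesis
        using Qc add.l_cancel by blast
    qed
    then show ?thesis
      using W by (simp add: card_le_Suc0_iff_eq)
  qed
  have "(\<Sum>w1\<in>W. \<Sum>w2\<in>W. real (card {x \<in> ?V. ?E x w1 w2}))
      = (\<Sum>w1\<in>W. \<Sum>w2\<in>W. \<Sum>x\<in>?V. if ?E x w1 w2 then 1 else 0)"
    using finV by (simp add: sum.inter_filter[symmetric])
  also have "\<dots> = (\<Sum>x\<in>?V. \<Sum>w1\<in>W. \<Sum>w2\<in>W. if ?E x w1 w2 then 1 else 0)"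
    by (simp add: sum.swap[of _ W ?V])
  also have "\<dots> = (\<Sum>x\<in>?V. \<Sum>w1\<in>W. real (card {w2 \<in> W. ?E x w1 w2}))"
    using W by (simp add: sum.inter_filter[symmetric])
  also have "\<dots> \<le> (\<Sum>x\<in>?V. \<Sum>w1\<in>W. 1)"
    using unique by (intro sum_mono) auto
  also have "\<dots> = real (card ?V) * card W"
    by simp
  finally show ?thesis .
qed

lemma card_congruent_vectors_le:
  assumes "y1 \<in> vecs d (carrier R)" "Y \<subseteq> vecs d (carrier R)"
  shows "card {y2 \<in> Y. \<forall>i<d. y1 i \<ominus> y2 i \<in> M} \<le> card M ^ d"
proof -
  let ?B = "{y2 \<in> Y. \<forall>i<d. y1 i \<ominus> y2 i \<in> M}"
  let ?g = "\<lambda>y2. restrict (\<lambda>i. y1 i \<ominus> y2 i) {..<d}"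
  have "inj_on ?g ?B"
  proof (rule inj_onI)
    fix a b assume ab: "a \<in> ?B" "b \<in> ?B" and e: "?g a = ?g b"
    have "a i = b i" if i: "i < d" for i
    proof -
      have c: "y1 i \<in> carrier R" "a i \<in> carrier R" "b i \<in> carrier R"
        using assms ab i by auto
      have "y1 i \<ominus> a i = y1 i \<ominus> b i"
        using fun_cong[OF e, of i] i by simp
      then have "y1 i \<ominus> (y1 i \<ominus> a i) = y1 i \<ominus> (y1 i \<ominus> b i)"
        by simp
      then show ?thesis
        using c by algebra
    qed
    then show "a = b"
      using ab assms(2) by (intro PiE_ext[of _ "{..<d}" "\<lambda>_. carrier R"]) auto
  qed
  moreover have "?g ` ?B \<subseteq> vecs d M"
  proof (rule image_subsetI)
    fix y2 assume "y2 \<in> ?B"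
    then show "?g y2 \<in> vecs d M"
      unfolding restrict_PiE_iff by auto
  qed
  ultimately have "card ?B \<le> card (vecs d M)"
    using finite_max_ideal by (intro card_inj_on_le finite_PiE) auto
  then show ?thesis
    by (simp add: card_PiE)
qed

lemma sum_pair_coincidences_le:
  assumes y: "y1 \<in> vecs d (carrier R)" "y2 \<in> vecs d (carrier R)" and W: "W \<subseteq> carrier R"
  shows "(\<Sum>w1\<in>W. \<Sum>w2\<in>W. real (card {x \<in> vecs d (carrier R). sqdist_plus d x y1 w1 = sqdist_plus d x y2 w2}))
    \<le> real (card W) ^ 2 * real (card (carrier R)) ^ (d - 1)
      + (if \<forall>i<d. y1 i \<ominus> y2 i \<in> M then real (card (vecs d (carrier R))) * card W else 0)"
proof (cases "\<forall>i<d. y1 i \<ominus> y2 i \<in> M")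
  case True
  then show ?thesis
    using sum_card_sqdist_plus_eq_le[OF y W finite_subset[OF W finite_carrier]]
    by (simp add: add_increasing)
next
  case False
  then obtain i0 where i0: "i0 < d" "y1 i0 \<ominus> y2 i0 \<notin> M"
    by auto
  have "(\<Sum>w1\<in>W. \<Sum>w2\<in>W. real (card {x \<in> vecs d (carrier R). sqdist_plus d x y1 w1 = sqdist_plus d x y2 w2}))
      \<le> (\<Sum>w1\<in>W. \<Sum>w2\<in>W. real (card (carrier R) ^ (d - 1)))"
    using card_sqdist_plus_eq_le[OF y _ _ i0] W by (intro sum_mono) (simp add: subset_iff)
  then show ?thesis
    unfolding if_not_P[OF False] by (simp add: power2_eq_square)
qed

text \<open>Only pairs of centres congruent modulo \<open>M\<close> can share more than \<open>|R|\<^sup>d\<^sup>-\<^sup>1\<close> points.\<close>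
lemma sum_coincidences_le:
  assumes Y: "Y \<subseteq> vecs d (carrier R)" and W: "W \<subseteq> carrier R"
  shows "(\<Sum>p1\<in>Y \<times> W. \<Sum>p2\<in>Y \<times> W.
            real (card {x \<in> vecs d (carrier R). sqdist_plus d x (fst p1) (snd p1) = sqdist_plus d x (fst p2) (snd p2)}))
    \<le> real (card Y) ^ 2 * real (card W) ^ 2 * real (card (carrier R)) ^ (d - 1)
      + real (card Y) * real (card M) ^ d * real (card (vecs d (carrier R))) * real (card W)"
proof -
  let ?V = "vecs d (carrier R)"
  let ?c = "\<lambda>y1 w1 y2 w2. real (card {x \<in> ?V. sqdist_plus d x y1 w1 = sqdist_plus d x y2 w2})"
  let ?close = "\<lambda>y1 y2. \<forall>i<d. y1 i \<ominus> y2 i \<in> M"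
  have finY: "finite Y"
    using finite_subset[OF Y] finite_carrier by (simp add: finite_PiE)
  have pairs: "(\<Sum>p\<in>Y \<times> W. h p) = (\<Sum>y\<in>Y. \<Sum>w\<in>W. h (y, w))" for h :: "_ \<Rightarrow> real"
    by (simp add: sum.cartesian_product)
  have "(\<Sum>p1\<in>Y \<times> W. \<Sum>p2\<in>Y \<times> W. ?c (fst p1) (snd p1) (fst p2) (snd p2))
      = (\<Sum>y1\<in>Y. \<Sum>w1\<in>W. \<Sum>y2\<in>Y. \<Sum>w2\<in>W. ?c y1 w1 y2 w2)"
    by (simp add: pairs)
  also have "\<dots> = (\<Sum>y1\<in>Y. \<Sum>y2\<in>Y. \<Sum>w1\<in>W. \<Sum>w2\<in>W. ?c y1 w1 y2 w2)"
    by (rule sum.cong[OF refl]) (rule sum.swap)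
  also have "\<dots> \<le> (\<Sum>y1\<in>Y. \<Sum>y2\<in>Y. real (card W) ^ 2 * real (card (carrier R)) ^ (d - 1)
                    + (if ?close y1 y2 then real (card ?V) * card W else 0))"
    using sum_pair_coincidences_le Y W by (intro sum_mono) (simp add: subset_iff)
  also have "\<dots> = real (card Y) ^ 2 * real (card W) ^ 2 * real (card (carrier R)) ^ (d - 1)
      + real (card ?V) * card W * (\<Sum>y1\<in>Y. real (card {y2 \<in> Y. ?close y1 y2}))"
    using finY by (simp add: sum.distrib sum_distrib_left power2_eq_square sum.inter_filter[symmetric] mult_ac)
  also have "\<dots> \<le> real (card Y) ^ 2 * real (card W) ^ 2 * real (card (carrier R)) ^ (d - 1)
      + real (card ?V) * card W * (\<Sum>y1\<in>Y. real (card M) ^ d)"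
    using card_congruent_vectors_le Y
    by (intro add_left_mono mult_left_mono sum_mono) (auto simp flip: of_nat_power simp: subset_iff)
  finally show ?thesis
    by (simp add: mult_ac)
qed

lemma ring_sumset_subset: "A \<subseteq> carrier R \<Longrightarrow> ring_sumset R A \<subseteq> carrier R"
  unfolding ring_sumset_def by auto

lemma sq_sumset_subset:
  assumes "A \<subseteq> carrier R"
  shows "sq_sumset R n A \<subseteq> carrier R"
  unfolding sq_sumset_def using assms by (auto intro!: finsum_closed simp: Pi_def subset_iff)

lemma sq_sumset_Suc_mem:
  assumes A: "A \<subseteq> carrier R" and a: "a \<in> vecs d A" and b: "b \<in> A"
  shows "b \<otimes> b \<oplus> sqnorm d a \<in> sq_sumset R (Suc d) A"
proof -
  define f where "f i = (if i < d then a i else b)" for i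
  have aA: "\<And>i. i < d \<Longrightarrow> a i \<in> A"
    using a by auto
  then have fA: "f \<in> {..<Suc d} \<rightarrow> A"
    unfolding f_def using b by auto
  have fc: "\<And>i. i < Suc d \<Longrightarrow> f i \<in> carrier R"
    using fA A by auto
  have "finsum R (\<lambda>i. f i \<otimes> f i) {..<Suc d} = f d \<otimes> f d \<oplus> finsum R (\<lambda>i. f i \<otimes> f i) {..<d}"
    unfolding lessThan_Suc by (intro finsum_insert) (auto simp: Pi_def fc)
  also have "finsum R (\<lambda>i. f i \<otimes> f i) {..<d} = sqnorm d a"
    unfolding sqnorm_def using aA A by (intro finsum_cong') (auto simp: f_def)
  also have "f d \<otimes> f d = b \<otimes> b"
    by (simp add: f_def)
  finally have "b \<otimes> b \<oplus> sqnorm d a = finsum R (\<lambda>i. f i \<otimes> f i) {..<Suc d}"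
    by (rule sym)
  then show ?thesis
    unfolding sq_sumset_def using fA by blast
qed

text \<open>The points \<open>x = y + a\<close> with \<open>a \<in> A\<^sup>d\<close> lie in \<open>(A + A)\<^sup>d\<close> and satisfy \<open>|x - y|\<^sup>2 + b\<^sup>2 \<in> (d + 1) A\<^sup>2\<close>.\<close>
lemma card_incidences_ge:
  assumes A: "A \<subseteq> carrier R" and y: "y \<in> vecs d A" and b: "b \<in> A"
  shows "card A ^ d \<le> card {x \<in> vecs d (ring_sumset R A). sqdist_plus d x y (b \<otimes> b) \<in> sq_sumset R (Suc d) A}"
proof -
  let ?g = "\<lambda>a. restrict (\<lambda>i. y i \<oplus> a i) {..<d}"
  let ?S = "{x \<in> vecs d (ring_sumset R A). sqdist_plus d x y (b \<otimes> b) \<in> sq_sumset R (Suc d) A}"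
  have yc: "\<And>i. i < d \<Longrightarrow> y i \<in> carrier R"
    using y A by auto
  have "inj_on ?g (vecs d A)"
  proof (rule inj_onI)
    fix a a' assume a: "a \<in> vecs d A" "a' \<in> vecs d A" and e: "?g a = ?g a'"
    have "a i = a' i" if "i < d" for i
    proof (rule add.l_cancel)
      show "y i \<oplus> a i = y i \<oplus> a' i"
        using fun_cong[OF e, of i] that by simp
      show "a i \<in> carrier R" "a' i \<in> carrier R" "y i \<in> carrier R"
        using a A yc that by auto
    qed
    with a show "a = a'"
      by (intro PiE_ext) auto
  qed
  moreover have "?g ` vecs d A \<subseteq> ?S"
  proof (rule image_subsetI)
    fix a assume a: "a \<in> vecs d A"
    have ac: "\<And>i. i < d \<Longrightarrow> a i \<in> carrier R"
      using a A by auto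
    have "?g a \<in> vecs d (ring_sumset R A)"
      unfolding restrict_PiE_iff ring_sumset_def using y a by blast
    moreover have "sqnorm d (\<lambda>i. ?g a i \<ominus> y i) = sqnorm d a"
      unfolding sqnorm_def using ac yc by (intro finsum_cong') (auto, algebra)
    then have "sqdist_plus d (?g a) y (b \<otimes> b) = b \<otimes> b \<oplus> sqnorm d a"
      unfolding sqdist_plus_def using b A ac by (simp add: a_comm sqnorm_closed subset_iff)
    ultimately show "?g a \<in> ?S"
      using sq_sumset_Suc_mem[OF A a b] by simp
  qed
  moreover have "finite ?S"
    using finite_subset[OF ring_sumset_subset[OF A] finite_carrier] by (simp add: finite_PiE)
  ultimately have "card (vecs d A) \<le> card ?S"
    by (rule card_inj_on_le)
  then show ?thesis
    by (simp add: card_PiE)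
qed

definition sphere_count :: "nat \<Rightarrow> (nat \<Rightarrow> 'a) set \<Rightarrow> 'a set \<Rightarrow> (nat \<Rightarrow> 'a) \<times> 'a \<Rightarrow> real" where
  "sphere_count d Y W = (\<lambda>(x, t). real (card {p \<in> Y \<times> W. sqdist_plus d x (fst p) (snd p) = t}))"

lemma sphere_count_moments:
  assumes Y: "Y \<subseteq> vecs d (carrier R)" and W: "W \<subseteq> carrier R"
  shows "sum (sphere_count d Y W) (vecs d (carrier R) \<times> carrier R) = card (vecs d (carrier R)) * card (Y \<times> W)"
    and "(\<Sum>z\<in>vecs d (carrier R) \<times> carrier R. (sphere_count d Y W z)^2)
           \<le> real (card Y) ^ 2 * real (card W) ^ 2 * real (card (carrier R)) ^ (d - 1)
             + real (card Y) * real (card M) ^ d * real (card (vecs d (carrier R))) * real (card W)"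
proof -
  let ?V = "vecs d (carrier R)"
  let ?e = "\<lambda>x p. sqdist_plus d x (fst p) (snd p)"
  have finV: "finite ?V"
    using finite_carrier by (simp add: finite_PiE)
  have finP: "finite (Y \<times> W)"
    using finite_subset[OF Y finV] finite_subset[OF W finite_carrier] by simp
  have eU: "?e x p \<in> carrier R" if "x \<in> ?V" "p \<in> Y \<times> W" for x p
    using that sqdist_plus_closed[OF that(1) subsetD[OF Y] subsetD[OF W]] by (auto simp: mem_Times_iff)
  show "sum (sphere_count d Y W) (?V \<times> carrier R) = card ?V * card (Y \<times> W)"
    unfolding sphere_count_def using incidence_moments(1)[OF finV finite_carrier finP eU]
    by (simp add: sum.cartesian_product)
  have "(\<Sum>z\<in>?V \<times> carrier R. (sphere_count d Y W z)^2)
      = (\<Sum>p1\<in>Y \<times> W. \<Sum>p2\<in>Y \<times> W. real (card {x\<in>?V. ?e x p1 = ?e x p2}))"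
    unfolding sphere_count_def using incidence_moments(2)[OF finV finite_carrier finP eU]
    by (simp add: sum.cartesian_product split_def)
  also have "\<dots> \<le> real (card Y) ^ 2 * real (card W) ^ 2 * real (card (carrier R)) ^ (d - 1)
      + real (card Y) * real (card M) ^ d * real (card ?V) * real (card W)"
    by (rule sum_coincidences_le[OF Y W])
  finally show "(\<Sum>z\<in>?V \<times> carrier R. (sphere_count d Y W z)^2)
      \<le> real (card Y) ^ 2 * real (card W) ^ 2 * real (card (carrier R)) ^ (d - 1)
        + real (card Y) * real (card M) ^ d * real (card ?V) * real (card W)" .
qed

text \<open>Cauchy--Schwarz against the uniform distribution on \<open>R\<^sup>d \<times> R\<close>: the first moment gives the mean, and
  the coincidence bound makes the variance at most \<open>|Y| |M|\<^sup>d |R|\<^sup>d |W|\<close>.\<close>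
lemma incidence_upper_bound:
  assumes Y: "Y \<subseteq> vecs d (carrier R)" and W: "W \<subseteq> carrier R"
    and S: "S \<subseteq> vecs d (carrier R) \<times> carrier R" and d: "1 \<le> d"
  shows "sum (sphere_count d Y W) S
    \<le> card S * (card Y * card W / card (carrier R))
      + sqrt (card S * (card Y * card M ^ d * card (carrier R) ^ d * card W))"
proof -
  let ?D = "vecs d (carrier R) \<times> carrier R"
  let ?f = "sphere_count d Y W"
  have Rpos: "real (card (carrier R)) > 0"
    using finite_carrier by (auto simp: card_gt_0_iff)
  have cardD: "real (card ?D) = real (card (carrier R)) ^ d * card (carrier R)"
    using card_vecs[OF finite_carrier] by (simp add: card_cartesian_product)
  have mean: "sum ?f ?D / card ?D = card Y * card W / card (carrier R)"
    unfolding sphere_count_moments(1)[OF Y W] cardD using Rpos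
    by (simp add: card_cartesian_product card_vecs[OF finite_carrier])
  have "real (card (carrier R)) ^ d = real (card (carrier R)) * real (card (carrier R)) ^ (d - 1)"
    using d by (metis Suc_diff_1 less_le_trans power_Suc zero_less_one)
  then have "(sum ?f ?D)^2 / card ?D = real (card Y) ^ 2 * real (card W) ^ 2 * real (card (carrier R)) ^ (d - 1)"
    unfolding sphere_count_moments(1)[OF Y W] cardD using Rpos
    by (simp add: card_cartesian_product card_vecs[OF finite_carrier] power2_eq_square field_simps)
  then have var: "(\<Sum>z\<in>?D. (?f z)^2) - (sum ?f ?D)^2 / card ?D
      \<le> real (card Y) * real (card M) ^ d * real (card (carrier R)) ^ d * real (card W)"
    using sphere_count_moments(2)[OF Y W] by (simp add: card_vecs[OF finite_carrier])
  have "sum ?f S \<le> card S * (sum ?f ?D / card ?D) + sqrt (card S * ((\<Sum>z\<in>?D. (?f z)^2) - (sum ?f ?D)^2 / card ?D))"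
  proof (rule sum_subset_le_mean_plus_deviation[OF _ S])
    show "finite ?D"
      using finite_carrier by (simp add: finite_PiE)
    have "real (card ?D) > 0"
      unfolding cardD using Rpos by simp
    then show "?D \<noteq> {}"
      by (metis card.empty of_nat_0 less_irrefl)
  qed
  also have "\<dots> \<le> card S * (card Y * card W / card (carrier R))
      + sqrt (card S * (card Y * card M ^ d * card (carrier R) ^ d * card W))"
    unfolding mean using var by (simp add: mult_left_mono)
  finally show ?thesis .
qed

text \<open>Double counting of the incidences between the spheres centred in \<open>A\<^sup>d \<times> A\<^sup>2\<close> and \<open>(A + A)\<^sup>d \<times> (d + 1) A\<^sup>2\<close>.\<close>
lemma main_inequality:
  assumes A: "A \<subseteq> carrier R" and d: "1 \<le> d"
  defines "s \<equiv> real (card (ring_sumset R A))" and "m \<equiv> real (card (sq_sumset R (Suc d) A))"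
    and "a \<equiv> real (card A)" and "w \<equiv> real (card ((\<lambda>a. a \<otimes> a) ` A))"
  shows "a ^ d * a ^ d * w \<le> s ^ d * m * a ^ d * w / card (carrier R)
           + sqrt (s ^ d * m * a ^ d * w * card M ^ d * card (carrier R) ^ d)"
proof -
  let ?Y = "vecs d A"
  let ?W = "(\<lambda>a. a \<otimes> a) ` A"
  let ?T = "sq_sumset R (Suc d) A"
  let ?S = "vecs d (ring_sumset R A) \<times> ?T"
  let ?e = "\<lambda>x p. sqdist_plus d x (fst p) (snd p)"
  have finA: "finite A"
    using finite_subset[OF A finite_carrier] .
  have finSS: "finite (ring_sumset R A)" and finT: "finite ?T"
    using finite_subset[OF ring_sumset_subset[OF A] finite_carrier]
      finite_subset[OF sq_sumset_subset[OF A] finite_carrier] .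
  have Y: "?Y \<subseteq> vecs d (carrier R)" and W: "?W \<subseteq> carrier R"
    using A by auto
  have S: "?S \<subseteq> vecs d (carrier R) \<times> carrier R"
    using ring_sumset_subset[OF A] sq_sumset_subset[OF A] by auto
  have "(\<Sum>p\<in>?Y \<times> ?W. a ^ d) \<le> (\<Sum>p\<in>?Y \<times> ?W. real (card {x \<in> vecs d (ring_sumset R A). ?e x p \<in> ?T}))"
  proof (rule sum_mono)
    fix p assume "p \<in> ?Y \<times> ?W"
    then obtain y b where "p = (y, b \<otimes> b)" "y \<in> ?Y" "b \<in> A"
      by auto
    then show "a ^ d \<le> real (card {x \<in> vecs d (ring_sumset R A). ?e x p \<in> ?T})"
      unfolding a_def using card_incidences_ge[OF A] by (simp flip: of_nat_power)
  qed
  also have "\<dots> = sum (sphere_count d ?Y ?W) ?S"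
    using finSS finT finA unfolding sphere_count_def
    by (simp add: sum.cartesian_product[symmetric] sum_incidences_swap finite_PiE)
  also have "\<dots> \<le> card ?S * (card ?Y * card ?W / card (carrier R))
      + sqrt (card ?S * (card ?Y * card M ^ d * card (carrier R) ^ d * card ?W))"
    by (rule incidence_upper_bound[OF Y W S d])
  finally show ?thesis
    using finA finSS unfolding s_def m_def a_def w_def
    by (simp add: card_cartesian_product card_vecs mult_ac)
qed

end

lemma fvr_odd_if_finite_valuation_ring:
  assumes "finite_valuation_ring R" "maximalideal M R" "z \<in> carrier R" "M = PIdl\<^bsub>R\<^esub> z"
    and "odd (card (carrier (R Quot M)))"
  shows "fvr_odd R M z"
proof -
  have "cring R" "finite (carrier R)" "\<And>M'. maximalideal M' R \<Longrightarrow> M' = M"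
    using assms(1,2) unfolding finite_valuation_ring_def by blast+
  then interpret fvr_uniformizer R M z
    using assms(2-4) by (intro fvr_uniformizer.intro fvr_uniformizer_axioms.intro)
  show ?thesis
    using two_Units assms(5) by (intro fvr_odd.intro[OF fvr_uniformizer_axioms] fvr_odd_axioms.intro)
qed

lemma powr_divide_power:
  fixes q x :: real
  assumes "0 < q" "0 < n"
  shows "(q powr (x / real n)) ^ n = q powr x"
  using assms by (simp add: powr_realpow[symmetric] powr_powr)

lemma le_16_mult_if_power_le:
  fixes T K :: real
  assumes "0 \<le> T" "0 \<le> K" "0 < n" and le: "T ^ n \<le> 16 * K ^ n"
  shows "T \<le> 16 * K"
proof -
  have "(16::real) ^ 1 \<le> 16 ^ n"
    using assms(3) by (intro power_increasing) auto
  then have "16 * K ^ n \<le> (16 * K) ^ n"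
    using assms(2) by (simp add: power_mult_distrib mult_right_mono)
  with le have "T ^ n \<le> (16 * K) ^ n"
    by linarith
  then show ?thesis
    using assms(1-3) power_le_imp_le_base[of T "n - 1" "16 * K"] by simp
qed

lemma le_of_first_term:
  fixes a w K Q :: real
  assumes "0 < a" "0 < w" "0 < Q" and le: "a ^ d * a ^ d * w \<le> 2 * (K * a ^ d * w / Q)"
  shows "Q * a ^ d \<le> 2 * K"
proof -
  have "(Q * a ^ d) * (a ^ d * w) \<le> (2 * K) * (a ^ d * w)"
    using le assms(3) by (simp add: field_simps)
  then show ?thesis
    using assms(1,2) by (simp add: mult_le_cancel_right_pos)
qed

lemma le_of_second_term:
  fixes a w K Q :: real
  assumes "0 < a" "a / 4 \<le> w" "0 \<le> K" "0 \<le> Q"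
    and le: "a ^ d * a ^ d * w \<le> 2 * sqrt (K * a ^ d * w * Q)"
  shows "a ^ (3 * d + 1) \<le> 16 * K * Q"
proof -
  have w: "0 < w"
    using assms(1,2) by linarith
  have "(a ^ d * w) * (a ^ d * a ^ d * a ^ d * w) = (a ^ d * a ^ d * w) ^ 2"
    by (simp add: power2_eq_square)
  also have "\<dots> \<le> (2 * sqrt (K * a ^ d * w * Q)) ^ 2"
    using le assms(1) w by (intro power_mono) auto
  also have "\<dots> = (a ^ d * w) * (4 * K * Q)"
    using assms(1,3,4) w by (simp add: power_mult_distrib)
  finally have "a ^ d * a ^ d * a ^ d * w \<le> 4 * K * Q"
    using assms(1) w by (simp add: mult_le_cancel_left_pos)
  moreover have "a ^ (3 * d + 1) \<le> 4 * (a ^ d * a ^ d * a ^ d * w)"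
    using assms(1,2) by (simp add: power_add power_mult_distrib mult_ac numeral_3_eq_3)
  ultimately show ?thesis
    by linarith
qed

lemma power_first_bound:
  fixes q a :: real
  assumes "0 < q" "0 < a"
  shows "(q powr (real r / real (Suc d)) * a powr ((real (Suc d) - 1) / real (Suc d))) ^ Suc d = q ^ r * a ^ d"
proof -
  have "(q powr (real r / real (Suc d))) ^ Suc d = q ^ r"
    using assms(1) by (simp only: powr_divide_power zero_less_Suc powr_realpow)
  moreover have "(a powr ((real (Suc d) - 1) / real (Suc d))) ^ Suc d = a ^ d"
    using assms(2) powr_divide_power[OF assms(2), of "Suc d" "real (Suc d) - 1"] by (simp add: powr_realpow)
  ultimately show ?thesis
    by (simp only: power_mult_distrib)
qed

lemma power_second_bound:
  fixes q a :: real
  assumes "0 < q" "0 < a" "1 \<le> r"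
  shows "(a powr ((3 * real (Suc d) - 2) / real (Suc d)) / q powr ((real (Suc d) - 1) * (2 * real r - 1) / real (Suc d))) ^ Suc d
         = a ^ (3 * d + 1) / q ^ ((2 * r - 1) * d)"
proof -
  have "3 * real (Suc d) - 2 = real (3 * d + 1)" "(real (Suc d) - 1) * (2 * real r - 1) = real ((2 * r - 1) * d)"
    using assms(3) by simp_all
  then show ?thesis
    unfolding power_divide using assms(1,2)
    by (simp only: powr_divide_power zero_less_Suc powr_realpow)
qed

lemma main_inequality_dichotomy:
  fixes a w K q :: real and d r :: nat
  assumes r: "1 \<le> r" and q: "0 < q" and a: "0 < a" and K: "0 \<le> K" and w: "a / 4 \<le> w"
    and main: "a ^ d * a ^ d * w \<le> K * a ^ d * w / q ^ r + sqrt (K * a ^ d * w * (q ^ (r - 1)) ^ d * (q ^ r) ^ d)"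
  shows "q ^ r * a ^ d \<le> 2 * K \<or> a ^ (3 * d + 1) \<le> 16 * K * q ^ ((2 * r - 1) * d)"
proof -
  have Q: "(q ^ (r - 1)) ^ d * (q ^ r) ^ d = q ^ ((2 * r - 1) * d)"
    using r by (simp add: power_add[symmetric] power_mult_distrib[symmetric] power_mult mult_2)
  from main consider "a ^ d * a ^ d * w \<le> 2 * (K * a ^ d * w / q ^ r)"
    | "a ^ d * a ^ d * w \<le> 2 * sqrt (K * a ^ d * w * q ^ ((2 * r - 1) * d))"
    unfolding Q[symmetric] mult.assoc[of _ "(q ^ (r - 1)) ^ d"] by linarith
  then show ?thesis
  proof cases
    case 1
    moreover have "0 < w"
      using a w by linarith
    ultimately show ?thesis
      using a q by (intro disjI1 le_of_first_term) auto
  next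
    case 2
    then show ?thesis
      using a w K q by (intro disjI2 le_of_second_term) auto
  qed
qed

lemma bound_of_main_inequality:
  fixes a w s m q :: real and n r :: nat
  assumes n: "1 < n" and r: "1 \<le> r" and q: "0 < q" and a: "0 < a" and s: "0 \<le> s" and m: "0 \<le> m"
    and w: "a / 4 \<le> w"
    and main: "a ^ (n - 1) * a ^ (n - 1) * w \<le> s ^ (n - 1) * m * a ^ (n - 1) * w / q ^ r
                 + sqrt (s ^ (n - 1) * m * a ^ (n - 1) * w * (q ^ (r - 1)) ^ (n - 1) * (q ^ r) ^ (n - 1))"
  shows "1/16 * min (q powr (real r / real n) * a powr ((real n - 1) / real n))
                  (a powr ((3 * real n - 2) / real n) / q powr ((real n - 1) * (2 * real r - 1) / real n))
         \<le> max m s"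
proof -
  define d where "d = n - 1"
  define Mx where "Mx = max m s"
  define T1 where "T1 = q powr (real r / real n) * a powr ((real n - 1) / real n)"
  define T2 where "T2 = a powr ((3 * real n - 2) / real n) / q powr ((real n - 1) * (2 * real r - 1) / real n)"
  have nd: "n = Suc d" and "0 < n"
    using n by (simp_all add: d_def)
  have Mx0: "0 \<le> Mx"
    using m by (simp add: Mx_def)
  have "s ^ d * m \<le> Mx ^ d * Mx"
    unfolding Mx_def using s m by (intro mult_mono power_mono) auto
  then have KM: "s ^ d * m \<le> Mx ^ n"
    by (simp add: nd mult.commute)
  have "q ^ r * a ^ d \<le> 2 * (s ^ d * m) \<or> a ^ (3 * d + 1) \<le> 16 * (s ^ d * m) * q ^ ((2 * r - 1) * d)"
    using main s m by (intro main_inequality_dichotomy[OF r q a _ w]) (simp_all add: d_def)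
  then have "T1 ^ n \<le> 16 * Mx ^ n \<or> T2 ^ n \<le> 16 * Mx ^ n"
    unfolding T1_def T2_def nd power_first_bound[OF q a] power_second_bound[OF q a r]
    using KM zero_le_power[OF Mx0, of n] q by (auto simp: nd divide_le_eq mult_right_mono order_trans)
  then have "T1 \<le> 16 * Mx \<or> T2 \<le> 16 * Mx"
    using le_16_mult_if_power_le[OF _ Mx0 \<open>0 < n\<close>] q a unfolding T1_def T2_def by auto
  then show ?thesis
    unfolding T1_def[symmetric] T2_def[symmetric] Mx_def[symmetric] by linarith
qed

theorem theorem1p7:
  fixes n :: nat
  assumes "n > 1"
  shows "\<exists>C::real. C > 0 \<and>
    (\<forall>(R :: ('a, 'b) ring_scheme) M z q r A.
       finite_valuation_ring R \<longrightarrow>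
       maximalideal M R \<longrightarrow> z \<in> carrier R \<longrightarrow> M = PIdl\<^bsub>R\<^esub> z \<longrightarrow>
       q = card (carrier (R Quot M)) \<longrightarrow>
       r = (LEAST k::nat. k > 0 \<and> z [^]\<^bsub>R\<^esub> k = \<zero>\<^bsub>R\<^esub>) \<longrightarrow>
       (\<exists>p k. Factorial_Ring.prime (p::nat) \<and> odd p \<and> k > 0 \<and> q = p ^ k) \<longrightarrow>
       A \<subseteq> carrier R \<longrightarrow> real (card A) \<ge> 2 * real q ^ (r - 1) \<longrightarrow>
       max (real (card (sq_sumset R n A))) (real (card (ring_sumset R A)))
         \<ge> C * min (real q powr (real r / real n) * real (card A) powr ((real n - 1) / real n))
                    (real (card A) powr ((3 * real n - 2) / real n)
                       / real q powr ((real n - 1) * (2 * real r - 1) / real n)))"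
proof (intro exI[of _ "1/16"] conjI allI impI)
  fix R :: "('a, 'b) ring_scheme" and M z q r A
  assume fvr: "finite_valuation_ring R" and max: "maximalideal M R" and z: "z \<in> carrier R"
    and Mz: "M = PIdl\<^bsub>R\<^esub> z" and q: "q = card (carrier (R Quot M))"
    and r: "r = (LEAST k::nat. k > 0 \<and> z [^]\<^bsub>R\<^esub> k = \<zero>\<^bsub>R\<^esub>)"
    and q_odd: "\<exists>p k. Factorial_Ring.prime (p::nat) \<and> odd p \<and> k > 0 \<and> q = p ^ k"
    and A: "A \<subseteq> carrier R" and A_large: "real (card A) \<ge> 2 * real q ^ (r - 1)"
  interpret fvr_odd R M z
    using fvr_odd_if_finite_valuation_ring[OF fvr max z Mz] q_odd q by auto
  have q_eq: "q = card ann_z" and r_eq: "r = nil_index"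
    unfolding q r nil_index_def by (simp_all add: card_residue_field)
  have "0 < q" "1 \<le> r"
    using card_ann_z_pos nil_index(1) q_eq r_eq by auto
  have card_M: "card M = q ^ (r - 1)"
    using card_max_ideal q_eq r_eq by simp
  with A_large have "2 * card M \<le> card A"
    by (simp flip: of_nat_power)
  then have squares: "real (card A) / 4 \<le> real (card ((\<lambda>a. a \<otimes>\<^bsub>R\<^esub> a) ` A))"
    by (rule card_squares_ge[OF A])
  have d: "1 \<le> n - 1" "Suc (n - 1) = n"
    using assms by auto
  have "1 \<le> real q ^ (r - 1)"
    using \<open>0 < q\<close> by simp
  with A_large have "0 < real (card A)"
    by linarith
  then show "max (real (card (sq_sumset R n A))) (real (card (ring_sumset R A)))
         \<ge> 1/16 * min (real q powr (real r / real n) * real (card A) powr ((real n - 1) / real n))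
                    (real (card A) powr ((3 * real n - 2) / real n)
                       / real q powr ((real n - 1) * (2 * real r - 1) / real n))"
    using main_inequality[OF A d(1), unfolded d(2)] squares \<open>0 < q\<close> \<open>1 \<le> r\<close> assms card_carrier card_M
    by (intro bound_of_main_inequality) (simp_all add: q_eq r_eq)
qed simp

end
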